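(* Let $G$ be the group given by the presentation $P=\langle x_1,\ldots,x_n\mid r_1^{a_1},\ldots,r_m^{a_m}\rangle$, where each $r_i$ is an element of the free group $F_n$ on $x_1,\ldots,x_n$ that is not a proper power, and let $\varphi:F_n\to G$ be the canonical map. Suppose there exist a residually finite group $N$ and a homomorphism $\psi:G\to N$ such that the order of $\psi(\varphi(r_i))$ in $N$ is $a_i$ for all $1\le i\le m$. Then \[rdef(P)=n-\sum_{i=1}^m\frac1{a_i}.\]
   Context: For the presentation $P$, let $R_G$ be the finite residual of $G$ (intersection of all finite index subgroups) and $k_i$ the order of $\varphi(r_i)R_G$ in $G/R_G$; the residual deficiency of $P$ is $rdef(P)=n-\sum_{i=1}^m 1/k_i$. *)

theory Defs
  imports "HOL-Algebra.Algebra"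
begin

text \<open>A letter (i, True) stands for x_i, (i, False) for its inverse.\<close>
type_synonym fword = "(nat \<times> bool) list"

definition inv_letter :: "nat \<times> bool \<Rightarrow> nat \<times> bool" where
  "inv_letter l = (fst l, \<not> snd l)"

fun reduced :: "fword \<Rightarrow> bool" where
  "reduced [] = True"
| "reduced [a] = True"
| "reduced (a # b # w) = (b \<noteq> inv_letter a \<and> reduced (b # w))"

fun red :: "fword \<Rightarrow> fword" where
  "red [] = []"
| "red (a # w) = (case red w of [] \<Rightarrow> [a]
                   | b # v \<Rightarrow> (if b = inv_letter a then v else a # b # v))"

definition free_group :: "nat \<Rightarrow> fword monoid" where
  "free_group n = \<lparr> carrier = {w. set w \<subseteq> {..<n} \<times> UNIV \<and> reduced w},
                    monoid.mult = (\<lambda>u v. red (u @ v)),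
                    monoid.one = [] \<rparr>"

definition normal_closure :: "('a, 'b) monoid_scheme \<Rightarrow> 'a set \<Rightarrow> 'a set" where
  "normal_closure G S = generate G
     {g \<otimes>\<^bsub>G\<^esub> s \<otimes>\<^bsub>G\<^esub> inv\<^bsub>G\<^esub> g | g s. g \<in> carrier G \<and> s \<in> S}"

text \<open>The relators of P = < x_1..x_n | r_1^a_1, ..., r_m^a_m > (indexed 0..m-1).\<close>
definition pres_relators :: "nat \<Rightarrow> nat \<Rightarrow> (nat \<Rightarrow> fword) \<Rightarrow> (nat \<Rightarrow> nat) \<Rightarrow> fword set" where
  "pres_relators n m r a = {r i [^]\<^bsub>free_group n\<^esub> a i | i. i < m}"

definition pres_kernel :: "nat \<Rightarrow> nat \<Rightarrow> (nat \<Rightarrow> fword) \<Rightarrow> (nat \<Rightarrow> nat) \<Rightarrow> fword set" where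
  "pres_kernel n m r a = normal_closure (free_group n) (pres_relators n m r a)"

definition pres_group :: "nat \<Rightarrow> nat \<Rightarrow> (nat \<Rightarrow> fword) \<Rightarrow> (nat \<Rightarrow> nat) \<Rightarrow> fword set monoid" where
  "pres_group n m r a = free_group n Mod pres_kernel n m r a"

definition pres_map :: "nat \<Rightarrow> nat \<Rightarrow> (nat \<Rightarrow> fword) \<Rightarrow> (nat \<Rightarrow> nat) \<Rightarrow> fword \<Rightarrow> fword set" where
  "pres_map n m r a w = pres_kernel n m r a #>\<^bsub>free_group n\<^esub> w"

definition proper_power :: "('a, 'b) monoid_scheme \<Rightarrow> 'a \<Rightarrow> bool" where
  "proper_power G x \<longleftrightarrow> (\<exists>s \<in> carrier G. \<exists>k::nat. k \<ge> 2 \<and> x = s [^]\<^bsub>G\<^esub> k)"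

definition finite_index_subgroup :: "('a, 'b) monoid_scheme \<Rightarrow> 'a set \<Rightarrow> bool" where
  "finite_index_subgroup G H \<longleftrightarrow> subgroup H G \<and> finite (rcosets\<^bsub>G\<^esub> H)"

definition finite_residual :: "('a, 'b) monoid_scheme \<Rightarrow> 'a set" where
  "finite_residual G = \<Inter> {H. finite_index_subgroup G H}"

definition residually_finite :: "('a, 'b) monoid_scheme \<Rightarrow> bool" where
  "residually_finite G \<longleftrightarrow> finite_residual G = {\<one>\<^bsub>G\<^esub>}"

text \<open>rdef(P) = n - sum_i 1/k_i, k_i the order of phi(r_i) R_G in G/R_G
  (an infinite order is represented by ord = 0, so 1/k_i = 0 then).\<close>
definition rdef :: "nat \<Rightarrow> nat \<Rightarrow> (nat \<Rightarrow> fword) \<Rightarrow> (nat \<Rightarrow> nat) \<Rightarrow> real" where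
  "rdef n m r a =
     (let G = pres_group n m r a; R = finite_residual G
      in real n - (\<Sum>i<m. 1 / real (group.ord (G Mod R) (R #>\<^bsub>G\<^esub> pres_map n m r a (r i)))))"

end

theory Submission
  imports Defs
begin

text \<open>
  Preimages of finite index subgroups have finite index, so every homomorphism maps the finite
  residual into the finite residual. As N is residually finite, \<psi> therefore kills R_G. Hence
  phi(r_i)^k \<in> R_G forces \<psi>(phi(r_i))^k = 1, i.e. a_i divides k; conversely phi(r_i)^a_i = 1
  already holds in G. So every k_i equals a_i.
\<close>

definition reduce_cons :: "nat \<times> bool \<Rightarrow> fword \<Rightarrow> fword" where
  "reduce_cons l v = (case v of [] \<Rightarrow> [l] | b # u \<Rightarrow> if b = inv_letter l then u else l # b # u)"

lemma red_Cons_eq: "red (l # w) = reduce_cons l (red w)"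
  by (simp add: reduce_cons_def)

lemma inv_letter_inv_letter [simp]: "inv_letter (inv_letter l) = l"
  by (cases l) (simp add: inv_letter_def)

lemma reduced_ConsD: "reduced (b # u) \<Longrightarrow> reduced u"
  by (cases u) auto

lemma reduced_reduce_cons: "reduced v \<Longrightarrow> reduced (reduce_cons l v)"
  by (cases v) (auto simp: reduce_cons_def dest: reduced_ConsD)

lemma reduced_red: "reduced (red w)"
  by (induction w) (auto simp: red_Cons_eq reduced_reduce_cons simp del: red.simps(2))

lemma red_reduced: "reduced w \<Longrightarrow> red w = w"
  by (induction w rule: reduced.induct)
    (auto simp: red_Cons_eq reduce_cons_def simp del: red.simps(2))

lemma reduce_cons_inv_letter: "reduced v \<Longrightarrow> reduce_cons l (reduce_cons (inv_letter l) v) = v"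
  by (cases v rule: reduced.cases) (auto simp: reduce_cons_def)

lemma red_append_red: "red (u @ red v) = red (u @ v)"
  by (induction u) (auto simp: red_Cons_eq red_reduced reduced_red simp del: red.simps(2))

lemma red_reduce_cons_append:
  assumes "reduced w"
  shows "red (reduce_cons l w @ v) = reduce_cons l (red (w @ v))"
proof (cases w)
  case Nil
  then show ?thesis by (simp add: reduce_cons_def red_Cons_eq del: red.simps(2))
next
  case (Cons b w')
  show ?thesis
  proof (cases "b = inv_letter l")
    case True
    then have "reduce_cons l w = w'" using Cons by (simp add: reduce_cons_def)
    moreover have "red (w @ v) = reduce_cons (inv_letter l) (red (w' @ v))"
      using Cons True by (simp only: append_Cons red_Cons_eq)
    ultimately show ?thesis by (simp only: reduce_cons_inv_letter[OF reduced_red])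
  next
    case False
    then have "reduce_cons l w = l # w" using Cons by (simp add: reduce_cons_def)
    then show ?thesis by (simp only: append_Cons red_Cons_eq)
  qed
qed

lemma red_red_append: "red (red u @ v) = red (u @ v)"
  by (induction u)
    (simp_all only: red_Cons_eq append_Cons red_reduce_cons_append[OF reduced_red] red.simps(1)
      append_Nil red_reduced[OF reduced_red])

lemma set_reduce_cons: "set (reduce_cons l v) \<subseteq> insert l (set v)"
  by (cases v) (auto simp: reduce_cons_def)

lemma set_red: "set (red w) \<subseteq> set w"
  by (induction w) (use set_reduce_cons in \<open>fastforce simp: red_Cons_eq simp del: red.simps(2)\<close>)+

definition word_inv :: "fword \<Rightarrow> fword" where
  "word_inv w = rev (map inv_letter w)"

lemma red_word_inv_append: "red (word_inv w @ w) = []"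
proof (induction w)
  case Nil
  then show ?case by (simp add: word_inv_def)
next
  case (Cons l w)
  have cancel: "red (inv_letter l # l # w) = red w"
    using reduce_cons_inv_letter[OF reduced_red, of "inv_letter l" w] by (simp only: red_Cons_eq inv_letter_inv_letter)
  have "red (word_inv (l # w) @ l # w) = red (word_inv w @ (inv_letter l # l # w))"
    by (simp add: word_inv_def)
  also have "\<dots> = red (word_inv w @ red (inv_letter l # l # w))" by (simp only: red_append_red)
  also have "\<dots> = red (word_inv w @ w)" by (simp only: cancel red_append_red)
  finally show ?case using Cons by simp
qed

lemma group_free_group: "group (free_group n)"
proof (rule groupI)
  let ?F = "free_group n"
  have car: "\<And>w. w \<in> carrier ?F \<longleftrightarrow> set w \<subseteq> {..<n} \<times> UNIV \<and> reduced w"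
    and mult: "\<And>u v. u \<otimes>\<^bsub>?F\<^esub> v = red (u @ v)"
    and one: "\<one>\<^bsub>?F\<^esub> = []"
    by (simp_all add: free_group_def)
  show "\<And>x y. x \<in> carrier ?F \<Longrightarrow> y \<in> carrier ?F \<Longrightarrow> x \<otimes>\<^bsub>?F\<^esub> y \<in> carrier ?F"
    unfolding car mult using set_red reduced_red by fastforce
  show "\<one>\<^bsub>?F\<^esub> \<in> carrier ?F" unfolding car one by simp
  show "\<And>x y z. x \<otimes>\<^bsub>?F\<^esub> y \<otimes>\<^bsub>?F\<^esub> z = x \<otimes>\<^bsub>?F\<^esub> (y \<otimes>\<^bsub>?F\<^esub> z)"
    unfolding mult by (metis append_assoc red_append_red red_red_append)
  show "\<And>x. x \<in> carrier ?F \<Longrightarrow> \<one>\<^bsub>?F\<^esub> \<otimes>\<^bsub>?F\<^esub> x = x"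
    unfolding mult one car by (simp add: red_reduced)
  show "\<exists>y\<in>carrier ?F. y \<otimes>\<^bsub>?F\<^esub> x = \<one>\<^bsub>?F\<^esub>" if x: "x \<in> carrier ?F" for x
  proof
    show "red (word_inv x) \<otimes>\<^bsub>?F\<^esub> x = \<one>\<^bsub>?F\<^esub>"
      unfolding mult one by (simp add: red_red_append red_word_inv_append)
    have "set (word_inv x) \<subseteq> {..<n} \<times> UNIV"
      using x unfolding car word_inv_def by (auto simp: inv_letter_def)
    then show "red (word_inv x) \<in> carrier ?F" unfolding car using set_red reduced_red by blast
  qed
qed

lemma (in group) rcoset_eq_iff:
  assumes "subgroup H G" "x \<in> carrier G" "y \<in> carrier G"
  shows "H #> x = H #> y \<longleftrightarrow> x \<otimes> inv y \<in> H"
  using assms rcos_self[of x H] repr_independence[of x H y]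
    subgroup.rcos_module[OF assms(1) is_group, of y x] by auto

lemma finite_image_eq_fibres:
  assumes "\<And>x y. x \<in> A \<Longrightarrow> y \<in> A \<Longrightarrow> h x = h y \<longleftrightarrow> g x = g y" and "finite (g ` A)"
  shows "finite (h ` A)"
proof -
  define pick where "pick C = (SOME x. x \<in> A \<and> g x = C)" for C
  have "h x = h (pick (g x))" if "x \<in> A" for x
  proof -
    have "pick (g x) \<in> A \<and> g (pick (g x)) = g x"
      unfolding pick_def by (rule someI[of _ x]) (use that in auto)
    then show ?thesis using assms(1) that by metis
  qed
  then have "h ` A \<subseteq> (h \<circ> pick) ` (g ` A)" by auto
  then show ?thesis using assms(2) finite_subset by blast
qed

lemma finite_index_subgroup_vimage:
  fixes G (structure)
  assumes "group G" "group N" "f \<in> hom G N" and H: "finite_index_subgroup N H"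
  shows "finite_index_subgroup G {x \<in> carrier G. f x \<in> H}"
proof -
  interpret group_hom G N f using assms by (simp add: group_hom_def group_hom_axioms_def)
  let ?P = "{x \<in> carrier G. f x \<in> H}"
  have H_sub: "subgroup H N" and H_index: "finite (rcosets\<^bsub>N\<^esub> H)"
    using H unfolding finite_index_subgroup_def by auto
  have P_sub: "subgroup ?P G"
    by (rule G.subgroupI)
      (use subgroup.one_closed[OF H_sub] subgroup.m_inv_closed[OF H_sub]
        subgroup.m_closed[OF H_sub] in \<open>auto intro!: exI[of _ \<one>]\<close>)
  have fibres: "?P #> x = ?P #> y \<longleftrightarrow> H #>\<^bsub>N\<^esub> f x = H #>\<^bsub>N\<^esub> f y"
    if "x \<in> carrier G" "y \<in> carrier G" for x y
    using that G.rcoset_eq_iff[OF P_sub] H.rcoset_eq_iff[OF H_sub] by simp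
  have "(\<lambda>x. H #>\<^bsub>N\<^esub> f x) ` carrier G \<subseteq> rcosets\<^bsub>N\<^esub> H"
    unfolding RCOSETS_def using hom_closed by blast
  then have "finite ((\<lambda>x. H #>\<^bsub>N\<^esub> f x) ` carrier G)"
    using H_index by (rule finite_subset)
  then have "finite ((\<lambda>x. ?P #> x) ` carrier G)"
    using fibres by (rule finite_image_eq_fibres[rotated])
  moreover have "rcosets ?P = (\<lambda>x. ?P #> x) ` carrier G"
    by (auto simp: RCOSETS_def)
  ultimately show ?thesis using P_sub unfolding finite_index_subgroup_def by simp
qed

lemma (in group) conjugation_hom:
  assumes "g \<in> carrier G"
  shows "(\<lambda>y. g \<otimes> y \<otimes> inv g) \<in> hom G G"
proof -
  have "inv g \<otimes> (g \<otimes> y) = y" if "y \<in> carrier G" for y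
    using assms that by (simp add: m_assoc[symmetric])
  then show ?thesis unfolding hom_def using assms by (auto simp: m_assoc)
qed

lemma (in group) finite_index_subgroup_carrier: "finite_index_subgroup G (carrier G)"
proof -
  have "rcosets (carrier G) = {carrier G}"
    using subgroup_self coset_join2 by (auto simp: RCOSETS_def)
  then show ?thesis unfolding finite_index_subgroup_def using subgroup_self by simp
qed

lemma finite_residual_hom:
  assumes "group G" "group N" "f \<in> hom G N" "x \<in> finite_residual G"
  shows "f x \<in> finite_residual N"
  unfolding finite_residual_def
proof
  fix H assume "H \<in> {H. finite_index_subgroup N H}"
  then have "finite_index_subgroup G {x \<in> carrier G. f x \<in> H}"
    using finite_index_subgroup_vimage[OF assms(1-3)] by blast
  then show "f x \<in> H" using assms(4) unfolding finite_residual_def by blast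
qed

lemma residually_finite_hom_finite_residual:
  assumes "group G" "group N" "residually_finite N" "f \<in> hom G N" "x \<in> finite_residual G"
  shows "f x = \<one>\<^bsub>N\<^esub>"
  using finite_residual_hom[OF assms(1,2,4,5)] assms(3) unfolding residually_finite_def by simp

lemma (in group) normal_finite_residual: "finite_residual G \<lhd> G"
proof (rule normal_invI)
  show "subgroup (finite_residual G) G"
    unfolding finite_residual_def
    using finite_index_subgroup_carrier
    by (intro subgroups_Inter) (auto simp: finite_index_subgroup_def)
  show "g \<otimes> h \<otimes> inv g \<in> finite_residual G" if "g \<in> carrier G" "h \<in> finite_residual G" for g h
    using finite_residual_hom[OF is_group is_group conjugation_hom[OF that(1)] that(2)] by simp
qed

lemma ord_FactGroup_rcoset:
  fixes G (structure)
  assumes "R \<lhd> G" "group N" "f \<in> hom G N"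
    and f_R: "\<And>y. y \<in> R \<Longrightarrow> f y = \<one>\<^bsub>N\<^esub>"
    and x: "x \<in> carrier G" and x_pow: "x [^] d = \<one>" and ord_fx: "group.ord N (f x) = d"
  shows "group.ord (G Mod R) (R #> x) = d"
proof -
  interpret normal R G by (rule assms(1))
  interpret N: group N by (rule assms(2))
  interpret group_hom G N f using assms(2,3) by (simp add: group_hom_def group_hom_axioms_def is_group)
  interpret Q: group "G Mod R" by (rule factorgroup_is_group)
  have pow_in_R: "x [^] k \<in> R \<longleftrightarrow> d dvd k" for k :: nat
  proof
    assume "x [^] k \<in> R"
    then have "f x [^]\<^bsub>N\<^esub> k = \<one>\<^bsub>N\<^esub>" using f_R hom_nat_pow[OF x] by metis
    then show "d dvd k" using N.pow_eq_id[OF hom_closed[OF x]] ord_fx by simp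
  next
    assume "d dvd k"
    then obtain j where "k = d * j" ..
    then have "x [^] k = \<one>" using x_pow by (simp add: nat_pow_pow[OF x, symmetric])
    then show "x [^] k \<in> R" using subgroup.one_closed[OF subgroup_axioms] by simp
  qed
  have "(R #> x) [^]\<^bsub>G Mod R\<^esub> k = \<one>\<^bsub>G Mod R\<^esub> \<longleftrightarrow> x [^] k \<in> R" for k :: nat
    using FactGroup_pow[OF x, of k] coset_join1[OF _ nat_pow_closed[OF x] subgroup_axioms]
      coset_join2[OF nat_pow_closed[OF x] subgroup_axioms] by auto
  moreover have "R #> x \<in> carrier (G Mod R)" using x by (simp add: carrier_FactGroup)
  ultimately show ?thesis using Q.ord_unique pow_in_R by simp
qed

lemma (in group) normal_normal_closure:
  assumes "S \<subseteq> carrier G"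
  shows "normal_closure G S \<lhd> G"
  unfolding normal_closure_def
proof (rule normal_generateI)
  show "{g \<otimes> s \<otimes> inv g | g s. g \<in> carrier G \<and> s \<in> S} \<subseteq> carrier G" using assms by auto
  fix h g assume "h \<in> {g \<otimes> s \<otimes> inv g | g s. g \<in> carrier G \<and> s \<in> S}" and g: "g \<in> carrier G"
  then obtain g' s where h: "h = g' \<otimes> s \<otimes> inv g'" "g' \<in> carrier G" "s \<in> S" by blast
  then have "g \<otimes> h \<otimes> inv g = (g \<otimes> g') \<otimes> s \<otimes> inv (g \<otimes> g')"
    using assms g by (simp add: subset_iff m_assoc inv_mult_group)
  then show "g \<otimes> h \<otimes> inv g \<in> {g \<otimes> s \<otimes> inv g | g s. g \<in> carrier G \<and> s \<in> S}"
    using h g by blast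
qed

lemma (in group) normal_closure_incl:
  assumes "S \<subseteq> carrier G" "s \<in> S"
  shows "s \<in> normal_closure G S"
proof -
  have "s = \<one> \<otimes> s \<otimes> inv \<one>" using assms by auto
  then show ?thesis unfolding normal_closure_def using assms(2) by (blast intro: generate.incl)
qed

context
  fixes n m :: nat and r :: "nat \<Rightarrow> fword" and a :: "nat \<Rightarrow> nat"
  assumes r_in: "\<And>i. i < m \<Longrightarrow> r i \<in> carrier (free_group n)"
begin

interpretation F: group "free_group n" by (rule group_free_group)

lemma pres_relators_subset: "pres_relators n m r a \<subseteq> carrier (free_group n)"
  unfolding pres_relators_def using r_in by auto

lemma normal_pres_kernel: "pres_kernel n m r a \<lhd> free_group n"
  unfolding pres_kernel_def by (rule F.normal_normal_closure[OF pres_relators_subset])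

lemma group_pres_group: "group (pres_group n m r a)"
  unfolding pres_group_def by (rule normal.factorgroup_is_group[OF normal_pres_kernel])

lemma pres_map_closed: "w \<in> carrier (free_group n) \<Longrightarrow> pres_map n m r a w \<in> carrier (pres_group n m r a)"
  unfolding pres_map_def pres_group_def by (simp add: carrier_FactGroup)

lemma pres_map_relator_pow:
  assumes "i < m"
  shows "pres_map n m r a (r i) [^]\<^bsub>pres_group n m r a\<^esub> a i = \<one>\<^bsub>pres_group n m r a\<^esub>"
proof -
  let ?K = "pres_kernel n m r a"
  have "r i [^]\<^bsub>free_group n\<^esub> a i \<in> ?K"
    unfolding pres_kernel_def using assms
    by (intro F.normal_closure_incl[OF pres_relators_subset]) (auto simp: pres_relators_def)
  then have "?K #>\<^bsub>free_group n\<^esub> (r i [^]\<^bsub>free_group n\<^esub> a i) = ?K"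
    using F.coset_join2 normal_imp_subgroup[OF normal_pres_kernel] r_in[OF assms] by simp
  then show ?thesis
    unfolding pres_map_def pres_group_def
    using normal.FactGroup_pow[OF normal_pres_kernel r_in[OF assms]] by simp
qed

end

theorem mainTheorem11:
  fixes n m :: nat
    and r :: "nat \<Rightarrow> fword"
    and a :: "nat \<Rightarrow> nat"
    and N :: "('c, 'd) monoid_scheme"
    and \<psi> :: "fword set \<Rightarrow> 'c"
  assumes r_in: "\<And>i. i < m \<Longrightarrow> r i \<in> carrier (free_group n)"
    and r_npp: "\<And>i. i < m \<Longrightarrow> \<not> proper_power (free_group n) (r i)"
    and a_pos: "\<And>i. i < m \<Longrightarrow> a i \<ge> 1"
    and N_grp: "group N"
    and N_rf: "residually_finite N"
    and \<psi>_hom: "\<psi> \<in> hom (pres_group n m r a) N"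
    and ord_eq: "\<And>i. i < m \<Longrightarrow> group.ord N (\<psi> (pres_map n m r a (r i))) = a i"
  shows "rdef n m r a = real n - (\<Sum>i<m. 1 / real (a i))"
proof -
  define G where "G = pres_group n m r a"
  define R where "R = finite_residual G"
  have G: "group G" unfolding G_def using r_in by (rule group_pres_group)
  have \<psi>_R: "\<psi> y = \<one>\<^bsub>N\<^esub>" if "y \<in> R" for y
    using residually_finite_hom_finite_residual[OF G N_grp N_rf] \<psi>_hom that
    unfolding G_def R_def by blast
  have "group.ord (G Mod R) (R #>\<^bsub>G\<^esub> pres_map n m r a (r i)) = a i" if i: "i < m" for i
  proof (rule ord_FactGroup_rcoset[OF group.normal_finite_residual[OF G, folded R_def] N_grp _ \<psi>_R])
    show "\<psi> \<in> hom G N" using \<psi>_hom unfolding G_def .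
    show "pres_map n m r a (r i) \<in> carrier G"
      unfolding G_def using pres_map_closed[where n = n and m = m and r = r, OF r_in r_in[OF i]] .
    show "pres_map n m r a (r i) [^]\<^bsub>G\<^esub> a i = \<one>\<^bsub>G\<^esub>"
      unfolding G_def using pres_map_relator_pow[where n = n and m = m and r = r, OF r_in i] .
    show "group.ord N (\<psi> (pres_map n m r a (r i))) = a i" by (rule ord_eq[OF i])
  qed
  then show ?thesis unfolding rdef_def Let_def G_def R_def by simp
qed

end
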